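(* Let $\mathbf X\in\mathscr C^p_\omega([0,T],\mathcal M)$. (1) If $\boldsymbol H\in\mathscr D_X(\mathbb R^{e\times d})$ satisfies $\boldsymbol H=\boldsymbol H\cdot\boldsymbol Q(X)$, then $\int\boldsymbol H\,d_{\mathcal M}\mathbf X=0$ as a rough path. (2) Consequently, if $\boldsymbol H,\boldsymbol K\in\mathscr D_X(\mathbb R^{e\times d})$ satisfy $\boldsymbol K-\boldsymbol H=(\boldsymbol K-\boldsymbol H)\cdot\boldsymbol Q(X)$, then $\int\boldsymbol H\,d_{\mathcal M}\mathbf X=\int\boldsymbol K\,d_{\mathcal M}\mathbf X$ as rough paths.
   Context: Let $\mathcal M\subseteq\mathbb R^d$ be an embedded smooth submanifold, $\Pi$ the nearest-point (Riemannian) projection onto $\mathcal M$, defined and smooth on a tubular neighbourhood $A$ of $\mathcal M$ (so $\Pi\circ\Pi=\Pi$, $\Pi|_{\mathcal M}=\mathrm{id}$). Set $P:=D\Pi$ and $Q:=I_d-D\Pi$ on $A$; for $y\in\mathcal M$, $P(y)$ and $Q(y)$ are the orthogonal projections onto the tangent and normal spaces. Fix $p\in[1,3)$ and a control $\omega$. Euclidean rough paths $\mathbf X=(X,\mathbb X)$ ($|X_{st}|\lesssim\omega^{1/p}$, $|\mathbb X_{st}|\lesssim\omega^{2/p}$, Chen's identity $\mathbb X^{ab}_{st}=\mathbb X^{ab}_{su}+X^a_{su}X^b_{ut}+\mathbb X^{ab}_{ut}$); controlled paths $(H,H')$ with $H_{st}-H'_sX_{st}=O(\omega^{2/p})$,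 matrix-valued ones with differentiation index first (for $\boldsymbol H\in\mathscr D_X(\mathbb R^{e\times d})$: trace $H_b$, derivative $H'_{ab}$); rough integral $\int\boldsymbol H\,d\mathbf X=\lim\sum H_{c;u}X^c_{uv}+H'_{ab;u}\mathbb X^{ab}_{uv}$, viewed as rough path via the lift with second order part $\approx H^i_{a;s}H^j_{b;s}\mathbb X^{ab}_{st}$ ($\approx$ = up to $o(\omega(s,t))$). Pushforward $\Pi_*\mathbf X$: rough path with trace $\Pi(X)$ and second order part $\approx\partial_a\Pi^c\partial_b\Pi^d(X_s)\mathbb X^{ab}_{st}$. $\mathscr C^p_\omega([0,T],\mathcal M)$ is the set of rough paths with trace in $\mathcal M$ and $\Pi_*\mathbf X=\mathbf X$. Pullback: $\Pi^*\boldsymbol H=(H_c\partial_b\Pi^c(X),\,H'_{ij}\partial_a\Pi^i\partial_b\Pi^j(X)+H_c\partial_{ab}\Pi^c(X))$. Constrained rough integral: $\int\boldsymbol H\,d_{\mathcal M}\mathbf X:=\int\Pi^*\boldsymbol H\,d\mathbf X$. $\boldsymbol Q(X)$ is the $X$-controlled path $(Q^c_b(X),\partial_aQ^c_b(X))=(Q^c_b(X),-\partial_{ab}\Pi^c(X))$, and the Leibniz product is $\boldsymbol H\cdot\boldsymbol Q(X)=(H_cQ^c_b(X),\,H'_{ac}Q^c_b(X)+H_c\partial_aQ^c_b(X))$. *)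

theory Defs
  imports "HOL-Analysis.Analysis"
begin

fun Ck_on :: "nat \<Rightarrow> 'a::real_normed_vector set \<Rightarrow> ('a \<Rightarrow> 'b::real_normed_vector) \<Rightarrow> bool" where
  "Ck_on 0 S f = continuous_on S f"
| "Ck_on (Suc k) S f =
     ((\<forall>x\<in>S. f differentiable (at x)) \<and>
      (\<forall>v. Ck_on k S (\<lambda>x. frechet_derivative f (at x) v)))"

definition smooth_on :: "'a::real_normed_vector set \<Rightarrow> ('a \<Rightarrow> 'b::real_normed_vector) \<Rightarrow> bool" where
  "smooth_on S f \<longleftrightarrow> (\<forall>k. Ck_on k S f)"

definition embedded_submanifold :: "'a::euclidean_space set \<Rightarrow> bool" where
  "embedded_submanifold M \<longleftrightarrow>
     (\<forall>x\<in>M. \<exists>U V (\<phi>::'a \<Rightarrow> 'a) (\<psi>::'a \<Rightarrow> 'a) L.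
        open U \<and> x \<in> U \<and> open V \<and> subspace L \<and>
        smooth_on U \<phi> \<and> smooth_on V \<psi> \<and> \<phi> ` U = V \<and>
        (\<forall>y\<in>U. \<psi> (\<phi> y) = y) \<and> (\<forall>z\<in>V. \<phi> (\<psi> z) = z) \<and>
        \<phi> ` (M \<inter> U) = V \<inter> L)"

definition nearest_point_projection ::
  "(real^'d) set \<Rightarrow> (real^'d) set \<Rightarrow> (real^'d \<Rightarrow> real^'d) \<Rightarrow> bool" where
  "nearest_point_projection M A Pr \<longleftrightarrow>
     open A \<and> M \<subseteq> A \<and> smooth_on A Pr \<and>
     (\<forall>x\<in>A. Pr x \<in> M \<and> (\<forall>y\<in>M. dist x (Pr x) \<le> dist x y) \<and>
             (\<forall>y\<in>M. dist x y = dist x (Pr x) \<longrightarrow> y = Pr x))"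

text \<open>Partial derivatives: d1 f b x = \<partial>_b f(x), d2 f a b x = \<partial>_a \<partial>_b f(x) (vectors; take component c).\<close>
definition d1 :: "(real^'d \<Rightarrow> real^'d) \<Rightarrow> 'd \<Rightarrow> real^'d \<Rightarrow> real^'d" where
  "d1 f b x = frechet_derivative f (at x) (axis b 1)"

definition d2 :: "(real^'d \<Rightarrow> real^'d) \<Rightarrow> 'd \<Rightarrow> 'd \<Rightarrow> real^'d \<Rightarrow> real^'d" where
  "d2 f a b x = d1 (\<lambda>y. d1 f b y) a x"

definition control :: "real \<Rightarrow> (real \<Rightarrow> real \<Rightarrow> real) \<Rightarrow> bool" where
  "control T \<omega> \<longleftrightarrow>
     continuous_on {(s,t). 0 \<le> s \<and> s \<le> t \<and> t \<le> T} (\<lambda>(s,t). \<omega> s t) \<and>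
     (\<forall>s t. 0 \<le> s \<and> s \<le> t \<and> t \<le> T \<longrightarrow> 0 \<le> \<omega> s t) \<and>
     (\<forall>t. 0 \<le> t \<and> t \<le> T \<longrightarrow> \<omega> t t = 0) \<and>
     (\<forall>s u t. 0 \<le> s \<and> s \<le> u \<and> u \<le> t \<and> t \<le> T \<longrightarrow> \<omega> s u + \<omega> u t \<le> \<omega> s t)"

text \<open>A rough path given by its (two-parameter) first order increments Z and second order part ZZ,
  with ZZ s t $ a $ b = ZZ^{ab}_{st}.\<close>
definition rough_incr ::
  "real \<Rightarrow> (real \<Rightarrow> real \<Rightarrow> real) \<Rightarrow> real \<Rightarrow> (real \<Rightarrow> real \<Rightarrow> real^'n)
     \<Rightarrow> (real \<Rightarrow> real \<Rightarrow> real^'n^'n) \<Rightarrow> bool" where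
  "rough_incr p \<omega> T Z ZZ \<longleftrightarrow>
     (\<exists>C. \<forall>s t. 0 \<le> s \<and> s \<le> t \<and> t \<le> T \<longrightarrow>
          norm (Z s t) \<le> C * \<omega> s t powr (1/p) \<and> norm (ZZ s t) \<le> C * \<omega> s t powr (2/p)) \<and>
     (\<forall>s u t. 0 \<le> s \<and> s \<le> u \<and> u \<le> t \<and> t \<le> T \<longrightarrow>
          Z s t = Z s u + Z u t \<and>
          ZZ s t = ZZ s u + (\<chi> a b. Z s u $ a * Z u t $ b) + ZZ u t)"

definition incr :: "(real \<Rightarrow> real^'n) \<Rightarrow> real \<Rightarrow> real \<Rightarrow> real^'n" where
  "incr X s t = X t - X s"

definition rough_path ::
  "real \<Rightarrow> (real \<Rightarrow> real \<Rightarrow> real) \<Rightarrow> real \<Rightarrow> (real \<Rightarrow> real^'n) \<Rightarrow> (real \<Rightarrow> real \<Rightarrow> real^'n^'n) \<Rightarrow> bool" where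
  "rough_path p \<omega> T X XX \<longleftrightarrow> rough_incr p \<omega> T (incr X) XX"

definition lift_of ::
  "real \<Rightarrow> (real \<Rightarrow> real \<Rightarrow> real) \<Rightarrow> real \<Rightarrow> (real \<Rightarrow> real \<Rightarrow> real^'n)
     \<Rightarrow> (real \<Rightarrow> real \<Rightarrow> real^'n^'n) \<Rightarrow> (real \<Rightarrow> real \<Rightarrow> real^'n^'n) \<Rightarrow> bool" where
  "lift_of p \<omega> T Z ZZ A \<longleftrightarrow>
     rough_incr p \<omega> T Z ZZ \<and>
     (\<forall>\<epsilon>>0. \<exists>\<delta>>0. \<forall>s t. 0 \<le> s \<and> s \<le> t \<and> t \<le> T \<and> \<omega> s t < \<delta> \<longrightarrow>
          norm (ZZ s t - A s t) \<le> \<epsilon> * \<omega> s t)"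

definition push_approx ::
  "(real^'d \<Rightarrow> real^'d) \<Rightarrow> (real \<Rightarrow> real^'d) \<Rightarrow> (real \<Rightarrow> real \<Rightarrow> real^'d^'d) \<Rightarrow> real \<Rightarrow> real \<Rightarrow> real^'d^'d" where
  "push_approx Pr X XX s t =
     (\<chi> c d. \<Sum>a\<in>UNIV. \<Sum>b\<in>UNIV. d1 Pr a (X s) $ c * d1 Pr b (X s) $ d * XX s t $ a $ b)"

definition is_pushforward ::
  "real \<Rightarrow> (real \<Rightarrow> real \<Rightarrow> real) \<Rightarrow> real \<Rightarrow> (real^'d \<Rightarrow> real^'d) \<Rightarrow> (real \<Rightarrow> real^'d)
     \<Rightarrow> (real \<Rightarrow> real \<Rightarrow> real^'d^'d) \<Rightarrow> (real \<Rightarrow> real \<Rightarrow> real^'d) \<Rightarrow> (real \<Rightarrow> real \<Rightarrow> real^'d^'d) \<Rightarrow> bool" where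
  "is_pushforward p \<omega> T Pr X XX Z ZZ \<longleftrightarrow>
     (\<forall>s t. 0 \<le> s \<and> s \<le> t \<and> t \<le> T \<longrightarrow> Z s t = Pr (X t) - Pr (X s)) \<and>
     lift_of p \<omega> T Z ZZ (push_approx Pr X XX)"

definition manifold_rough_path ::
  "real \<Rightarrow> (real \<Rightarrow> real \<Rightarrow> real) \<Rightarrow> real \<Rightarrow> (real^'d) set \<Rightarrow> (real^'d \<Rightarrow> real^'d)
     \<Rightarrow> (real \<Rightarrow> real^'d) \<Rightarrow> (real \<Rightarrow> real \<Rightarrow> real^'d^'d) \<Rightarrow> bool" where
  "manifold_rough_path p \<omega> T M Pr X XX \<longleftrightarrow>
     rough_path p \<omega> T X XX \<and> (\<forall>t. 0 \<le> t \<and> t \<le> T \<longrightarrow> X t \<in> M) \<and>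
     is_pushforward p \<omega> T Pr X XX (incr X) XX"

text \<open>Matrix-valued controlled path (H,H'), H t $ i $ b = H^i_{b;t}, H' t $ a $ i $ b = H'^i_{ab;t}
  (differentiation index a first).\<close>
definition controlled ::
  "real \<Rightarrow> (real \<Rightarrow> real \<Rightarrow> real) \<Rightarrow> real \<Rightarrow> (real \<Rightarrow> real^'d)
     \<Rightarrow> (real \<Rightarrow> real^'d^'e) \<Rightarrow> (real \<Rightarrow> real^'d^'e^'d) \<Rightarrow> bool" where
  "controlled p \<omega> T X H H' \<longleftrightarrow>
     (\<exists>C. \<forall>s t. 0 \<le> s \<and> s \<le> t \<and> t \<le> T \<longrightarrow>
        norm (H t - H s - (\<chi> i b. \<Sum>a\<in>UNIV. H' s $ a $ i $ b * (X t $ a - X s $ a)))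
            \<le> C * \<omega> s t powr (2/p) \<and>
        norm (H' t - H' s) \<le> C * \<omega> s t powr (1/p))"

definition is_partition :: "real \<Rightarrow> real \<Rightarrow> real list \<Rightarrow> bool" where
  "is_partition s t us \<longleftrightarrow> us \<noteq> [] \<and> hd us = s \<and> last us = t \<and> sorted_wrt (<) us"

definition mesh :: "real list \<Rightarrow> real" where
  "mesh us = (if length us < 2 then 0 else Max (set (map (\<lambda>(u,v). v - u) (zip us (tl us)))))"

definition psum :: "(real \<Rightarrow> real \<Rightarrow> 'a::comm_monoid_add) \<Rightarrow> real list \<Rightarrow> 'a" where
  "psum F us = sum_list (map (\<lambda>(u,v). F u v) (zip us (tl us)))"

definition partition_limit :: "(real \<Rightarrow> real \<Rightarrow> 'a::real_normed_vector) \<Rightarrow> real \<Rightarrow> real \<Rightarrow> 'a \<Rightarrow> bool" where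
  "partition_limit F s t I \<longleftrightarrow>
     (\<forall>\<epsilon>>0. \<exists>\<delta>>0. \<forall>us. is_partition s t us \<and> mesh us < \<delta> \<longrightarrow> norm (psum F us - I) < \<epsilon>)"

definition comp_term ::
  "(real \<Rightarrow> real^'d) \<Rightarrow> (real \<Rightarrow> real \<Rightarrow> real^'d^'d) \<Rightarrow> (real \<Rightarrow> real^'d^'e) \<Rightarrow> (real \<Rightarrow> real^'d^'e^'d)
     \<Rightarrow> real \<Rightarrow> real \<Rightarrow> real^'e" where
  "comp_term X XX H H' u v =
     (\<chi> i. (\<Sum>c\<in>UNIV. H u $ i $ c * (X v $ c - X u $ c)) +
           (\<Sum>a\<in>UNIV. \<Sum>b\<in>UNIV. H' u $ a $ i $ b * XX u v $ a $ b))"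

definition int_approx ::
  "(real \<Rightarrow> real \<Rightarrow> real^'d^'d) \<Rightarrow> (real \<Rightarrow> real^'d^'e) \<Rightarrow> real \<Rightarrow> real \<Rightarrow> real^'e^'e" where
  "int_approx XX H s t = (\<chi> i j. \<Sum>a\<in>UNIV. \<Sum>b\<in>UNIV. H s $ i $ a * H s $ j $ b * XX s t $ a $ b)"

definition is_rough_integral ::
  "real \<Rightarrow> (real \<Rightarrow> real \<Rightarrow> real) \<Rightarrow> real \<Rightarrow> (real \<Rightarrow> real^'d) \<Rightarrow> (real \<Rightarrow> real \<Rightarrow> real^'d^'d)
     \<Rightarrow> (real \<Rightarrow> real^'d^'e) \<Rightarrow> (real \<Rightarrow> real^'d^'e^'d)
     \<Rightarrow> (real \<Rightarrow> real \<Rightarrow> real^'e) \<Rightarrow> (real \<Rightarrow> real \<Rightarrow> real^'e^'e) \<Rightarrow> bool" where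
  "is_rough_integral p \<omega> T X XX H H' Z ZZ \<longleftrightarrow>
     (\<forall>s t. 0 \<le> s \<and> s \<le> t \<and> t \<le> T \<longrightarrow> partition_limit (comp_term X XX H H') s t (Z s t)) \<and>
     lift_of p \<omega> T Z ZZ (int_approx XX H)"

definition pull_trace ::
  "(real^'d \<Rightarrow> real^'d) \<Rightarrow> (real \<Rightarrow> real^'d) \<Rightarrow> (real \<Rightarrow> real^'d^'e) \<Rightarrow> real \<Rightarrow> real^'d^'e" where
  "pull_trace Pr X H t = (\<chi> r b. \<Sum>c\<in>UNIV. H t $ r $ c * d1 Pr b (X t) $ c)"

definition pull_deriv ::
  "(real^'d \<Rightarrow> real^'d) \<Rightarrow> (real \<Rightarrow> real^'d) \<Rightarrow> (real \<Rightarrow> real^'d^'e) \<Rightarrow> (real \<Rightarrow> real^'d^'e^'d)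
     \<Rightarrow> real \<Rightarrow> real^'d^'e^'d" where
  "pull_deriv Pr X H H' t =
     (\<chi> a r b. (\<Sum>i\<in>UNIV. \<Sum>j\<in>UNIV. H' t $ i $ r $ j * d1 Pr a (X t) $ i * d1 Pr b (X t) $ j) +
              (\<Sum>c\<in>UNIV. H t $ r $ c * d2 Pr a b (X t) $ c))"

definition is_constrained_integral ::
  "real \<Rightarrow> (real \<Rightarrow> real \<Rightarrow> real) \<Rightarrow> real \<Rightarrow> (real^'d \<Rightarrow> real^'d) \<Rightarrow> (real \<Rightarrow> real^'d)
     \<Rightarrow> (real \<Rightarrow> real \<Rightarrow> real^'d^'d) \<Rightarrow> (real \<Rightarrow> real^'d^'e) \<Rightarrow> (real \<Rightarrow> real^'d^'e^'d)
     \<Rightarrow> (real \<Rightarrow> real \<Rightarrow> real^'e) \<Rightarrow> (real \<Rightarrow> real \<Rightarrow> real^'e^'e) \<Rightarrow> bool" where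
  "is_constrained_integral p \<omega> T Pr X XX H H' Z ZZ \<longleftrightarrow>
     is_rough_integral p \<omega> T X XX (pull_trace Pr X H) (pull_deriv Pr X H H') Z ZZ"

definition Qm :: "(real^'d \<Rightarrow> real^'d) \<Rightarrow> real^'d \<Rightarrow> 'd \<Rightarrow> 'd \<Rightarrow> real" where
  "Qm Pr x c b = (if c = b then 1 else 0) - d1 Pr b x $ c"

definition dQm :: "(real^'d \<Rightarrow> real^'d) \<Rightarrow> real^'d \<Rightarrow> 'd \<Rightarrow> 'd \<Rightarrow> 'd \<Rightarrow> real" where
  "dQm Pr x a c b = - (d2 Pr a b x $ c)"

text \<open>Leibniz product H \<cdot> Q(X) = (H_c Q^c_b(X), H'_{ac} Q^c_b(X) + H_c \<partial>_a Q^c_b(X)).\<close>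
definition HQ_trace ::
  "(real^'d \<Rightarrow> real^'d) \<Rightarrow> (real \<Rightarrow> real^'d) \<Rightarrow> (real \<Rightarrow> real^'d^'e) \<Rightarrow> real \<Rightarrow> real^'d^'e" where
  "HQ_trace Pr X H t = (\<chi> r b. \<Sum>c\<in>UNIV. H t $ r $ c * Qm Pr (X t) c b)"

definition HQ_deriv ::
  "(real^'d \<Rightarrow> real^'d) \<Rightarrow> (real \<Rightarrow> real^'d) \<Rightarrow> (real \<Rightarrow> real^'d^'e) \<Rightarrow> (real \<Rightarrow> real^'d^'e^'d)
     \<Rightarrow> real \<Rightarrow> real^'d^'e^'d" where
  "HQ_deriv Pr X H H' t =
     (\<chi> a r b. \<Sum>c\<in>UNIV. H' t $ a $ r $ c * Qm Pr (X t) c b + H t $ r $ c * dQm Pr (X t) a c b)"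

definition fixed_by_Q ::
  "real \<Rightarrow> (real^'d \<Rightarrow> real^'d) \<Rightarrow> (real \<Rightarrow> real^'d) \<Rightarrow> (real \<Rightarrow> real^'d^'e) \<Rightarrow> (real \<Rightarrow> real^'d^'e^'d) \<Rightarrow> bool" where
  "fixed_by_Q T Pr X H H' \<longleftrightarrow>
     (\<forall>t. 0 \<le> t \<and> t \<le> T \<longrightarrow> H t = HQ_trace Pr X H t \<and> H' t = HQ_deriv Pr X H H' t)"

end

theory Submission
  imports Defs
begin

text \<open>On \<open>M\<close>, \<open>H = H \<cdot> Q(X)\<close> says that \<open>H\<close> annihilates the tangent projection \<open>P = D\<Pi>\<close> and
  that its Gubinelli derivative satisfies \<open>H' P = - H \<partial>P\<close>. Differentiating \<open>\<Pi> \<circ> \<Pi> = \<Pi>\<close> once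
  and twice at points of \<open>M\<close> turns these two relations into the vanishing of both components
  of the pullback \<open>\<Pi>\<^sup>*H\<close>. The constrained integral is then the rough integral of the zero
  controlled path: its compensated Riemann sums vanish, and the second order part of its lift
  is additive and \<open>o(\<omega>)\<close>, hence zero. Part (2) follows since the pullback is linear.\<close>

section \<open>The nearest-point projection\<close>

lemma nearest_point_projection_fixes:
  assumes npp: "nearest_point_projection M A Pr" and y: "y \<in> M"
  shows "Pr y = y"
proof -
  have yA: "y \<in> A" using npp y unfolding nearest_point_projection_def by auto
  then have "dist y (Pr y) \<le> dist y y"
    using npp y unfolding nearest_point_projection_def by blast
  then have "dist y y = dist y (Pr y)" by simp
  then show ?thesis using npp yA y unfolding nearest_point_projection_def by metis
qed

lemma nearest_point_projection_idem:
  assumes npp: "nearest_point_projection M A Pr" and x: "x \<in> A"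
  shows "Pr (Pr x) = Pr x" and "Pr x \<in> A"
proof -
  have "Pr x \<in> M" using npp x unfolding nearest_point_projection_def by auto
  then show "Pr (Pr x) = Pr x" and "Pr x \<in> A"
    using nearest_point_projection_fixes[OF npp] npp unfolding nearest_point_projection_def by auto
qed

lemma nearest_point_projection_has_derivative:
  assumes npp: "nearest_point_projection M A Pr" and x: "x \<in> A"
  shows "(Pr has_derivative frechet_derivative Pr (at x)) (at x)"
    and "(d1 Pr b has_derivative frechet_derivative (d1 Pr b) (at x)) (at x)"
proof -
  have "Ck_on 2 A Pr" using npp unfolding nearest_point_projection_def smooth_on_def by blast
  then have "Pr differentiable (at x)" "d1 Pr b differentiable (at x)"
    using x by (auto simp: numeral_2_eq_2 d1_def [abs_def])
  then show "(Pr has_derivative frechet_derivative Pr (at x)) (at x)"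
    and "(d1 Pr b has_derivative frechet_derivative (d1 Pr b) (at x)) (at x)"
    by (simp_all add: frechet_derivative_works)
qed

lemma linear_axis_expansion:
  assumes "linear f"
  shows "f w = (\<Sum>j\<in>UNIV. (w $ j) *\<^sub>R f (axis j (1::real)))"
proof -
  have "f w = f (\<Sum>j\<in>UNIV. (w $ j) *\<^sub>R axis j 1)"
    using basis_expansion[of w] by (simp add: scalar_mult_eq_scaleR)
  also have "\<dots> = (\<Sum>j\<in>UNIV. (w $ j) *\<^sub>R f (axis j 1))"
    by (simp add: linear_sum[OF assms] linear_scale[OF assms])
  finally show ?thesis .
qed

text \<open>Differentiating \<open>Pr \<circ> Pr = Pr\<close> gives \<open>DPr(Pr x) DPr(x) = DPr(x)\<close>.\<close>
lemma d1_projection_expansion: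
  assumes npp: "nearest_point_projection M A Pr" and x: "x \<in> A"
  shows "d1 Pr b x = (\<Sum>j\<in>UNIV. (d1 Pr b x $ j) *\<^sub>R d1 Pr j (Pr x))"
proof -
  let ?D = "\<lambda>z. frechet_derivative Pr (at z)"
  have oA: "open A" using npp unfolding nearest_point_projection_def by auto
  have PrxA: "Pr x \<in> A" using nearest_point_projection_idem[OF npp x] by simp
  have dx: "(Pr has_derivative ?D x) (at x)"
    using nearest_point_projection_has_derivative[OF npp x] by simp
  have dPx: "(Pr has_derivative ?D (Pr x)) (at (Pr x))"
    using nearest_point_projection_has_derivative[OF npp PrxA] by simp
  have "((Pr \<circ> Pr) has_derivative ?D (Pr x) \<circ> ?D x) (at x)"
    by (rule diff_chain_at[OF dx dPx])
  then have "(Pr has_derivative ?D (Pr x) \<circ> ?D x) (at x)"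
    by (rule has_derivative_transform_within_open[OF _ oA x])
      (simp add: nearest_point_projection_idem[OF npp])
  then have "?D (Pr x) \<circ> ?D x = ?D x"
    using dx has_derivative_unique by blast
  then have "d1 Pr b x = ?D (Pr x) (d1 Pr b x)"
    unfolding d1_def by (metis comp_apply)
  also have "\<dots> = (\<Sum>j\<in>UNIV. (d1 Pr b x $ j) *\<^sub>R d1 Pr j (Pr x))"
    unfolding d1_def
    by (rule linear_axis_expansion[OF has_derivative_linear[OF dPx]])
  finally show ?thesis .
qed

lemma d1_projection_idem:
  assumes npp: "nearest_point_projection M A Pr" and y: "y \<in> M"
  shows "(\<Sum>j\<in>UNIV. d1 Pr j y $ c * d1 Pr b y $ j) = d1 Pr b y $ c"
proof -
  have "y \<in> A" using npp y unfolding nearest_point_projection_def by auto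
  from arg_cong[OF d1_projection_expansion[OF npp this, of b], of "\<lambda>v. v $ c"]
  show ?thesis by (simp add: nearest_point_projection_fixes[OF npp y] mult.commute)
qed

lemma d2_projection_expansion:
  assumes npp: "nearest_point_projection M A Pr" and y: "y \<in> M"
  shows "d2 Pr a b y = (\<Sum>j\<in>UNIV. (d2 Pr a b y $ j) *\<^sub>R d1 Pr j y) +
          (\<Sum>j\<in>UNIV. (d1 Pr b y $ j) *\<^sub>R (\<Sum>i\<in>UNIV. (d1 Pr a y $ i) *\<^sub>R d2 Pr i j y))"
proof -
  let ?D = "\<lambda>f. frechet_derivative f (at y)"
  have oA: "open A" and yA: "y \<in> A" using npp y unfolding nearest_point_projection_def by auto
  have Pry: "Pr y = y" using nearest_point_projection_fixes[OF npp y] .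
  have dPr: "(Pr has_derivative ?D Pr) (at y)"
    and dd1: "\<And>j. (d1 Pr j has_derivative ?D (d1 Pr j)) (at y)"
    using nearest_point_projection_has_derivative[OF npp yA] by auto
  have chain: "((\<lambda>x. d1 Pr j (Pr x)) has_derivative (\<lambda>h. ?D (d1 Pr j) (?D Pr h))) (at y)" for j
    using diff_chain_at[OF dPr, of "d1 Pr j"] dd1 Pry by (simp add: o_def)
  have "((\<lambda>x. (d1 Pr b x $ j) *\<^sub>R d1 Pr j (Pr x)) has_derivative
      (\<lambda>h. (d1 Pr b y $ j) *\<^sub>R ?D (d1 Pr j) (?D Pr h) + (?D (d1 Pr b) h $ j) *\<^sub>R d1 Pr j y))
      (at y)" for j
    using has_derivative_scaleR[OF bounded_linear.has_derivative[OF bounded_linear_vec_nth dd1] chain]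
    by (simp only: Pry)
  then have "((\<lambda>x. \<Sum>j\<in>UNIV. (d1 Pr b x $ j) *\<^sub>R d1 Pr j (Pr x)) has_derivative
      (\<lambda>h. \<Sum>j\<in>UNIV. (d1 Pr b y $ j) *\<^sub>R ?D (d1 Pr j) (?D Pr h) + (?D (d1 Pr b) h $ j) *\<^sub>R d1 Pr j y))
      (at y)"
    by (rule has_derivative_sum)
  then have "(d1 Pr b has_derivative
      (\<lambda>h. \<Sum>j\<in>UNIV. (d1 Pr b y $ j) *\<^sub>R ?D (d1 Pr j) (?D Pr h) + (?D (d1 Pr b) h $ j) *\<^sub>R d1 Pr j y))
      (at y)"
    by (rule has_derivative_transform_within_open[OF _ oA yA])
      (simp add: d1_projection_expansion[OF npp])
  then have D_d1: "?D (d1 Pr b) = (\<lambda>h. \<Sum>j\<in>UNIV.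
      (d1 Pr b y $ j) *\<^sub>R ?D (d1 Pr j) (?D Pr h) + (?D (d1 Pr b) h $ j) *\<^sub>R d1 Pr j y)"
    using dd1 has_derivative_unique by blast
  have d2_eq: "d2 Pr i j y = ?D (d1 Pr j) (axis i 1)" for i j
    unfolding d2_def d1_def[of "d1 Pr j"] by simp
  have "?D (d1 Pr j) (?D Pr (axis a 1)) = (\<Sum>i\<in>UNIV. (d1 Pr a y $ i) *\<^sub>R d2 Pr i j y)" for j
    unfolding d2_eq d1_def[of Pr a]
    by (rule linear_axis_expansion[OF has_derivative_linear[OF dd1]])
  then show ?thesis
    unfolding d2_eq[of a b] by (subst D_d1) (simp add: sum.distrib d1_def add.commute)
qed

lemma sum_reverse_three:
  fixes f :: "'a::finite \<Rightarrow> 'b::finite \<Rightarrow> 'c::finite \<Rightarrow> real"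
  shows "(\<Sum>x\<in>UNIV. \<Sum>y\<in>UNIV. \<Sum>z\<in>UNIV. f x y z) = (\<Sum>z\<in>UNIV. \<Sum>y\<in>UNIV. \<Sum>x\<in>UNIV. f x y z)"
proof -
  have "(\<Sum>x\<in>UNIV. \<Sum>y\<in>UNIV. \<Sum>z\<in>UNIV. f x y z) = (\<Sum>x\<in>UNIV. \<Sum>z\<in>UNIV. \<Sum>y\<in>UNIV. f x y z)"
    by (rule sum.cong[OF refl], rule sum.swap)
  also have "\<dots> = (\<Sum>z\<in>UNIV. \<Sum>x\<in>UNIV. \<Sum>y\<in>UNIV. f x y z)" by (rule sum.swap)
  also have "\<dots> = (\<Sum>z\<in>UNIV. \<Sum>y\<in>UNIV. \<Sum>x\<in>UNIV. f x y z)"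
    by (rule sum.cong[OF refl], rule sum.swap)
  finally show ?thesis .
qed

text \<open>\<open>P c b\<close> plays \<open>\<partial>\<^sub>bPr\<^sup>c\<close> and \<open>D a b c\<close> plays \<open>\<partial>\<^sub>a\<^sub>bPr\<^sup>c\<close> at a point of the manifold;
  \<open>idem\<close> and \<open>second\<close> are the first and second derivatives of \<open>Pr \<circ> Pr = Pr\<close> there.\<close>
lemma second_order_pullback_cancels:
  fixes h :: "'d::finite \<Rightarrow> real" and h' P :: "'d \<Rightarrow> 'd \<Rightarrow> real" and D :: "'d \<Rightarrow> 'd \<Rightarrow> 'd \<Rightarrow> real"
  assumes normal: "\<And>b. (\<Sum>c\<in>UNIV. h c * P c b) = 0"
    and normal': "\<And>i b. (\<Sum>c\<in>UNIV. h' i c * P c b) = - (\<Sum>c\<in>UNIV. h c * D i b c)"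
    and idem: "\<And>c b. (\<Sum>j\<in>UNIV. P c j * P j b) = P c b"
    and second: "\<And>a b c. D a b c = (\<Sum>j\<in>UNIV. D a b j * P c j) +
                                   (\<Sum>j\<in>UNIV. P j b * (\<Sum>i\<in>UNIV. P i a * D i j c))"
  shows "(\<Sum>i\<in>UNIV. \<Sum>j\<in>UNIV. h' i j * P i a * P j b) + (\<Sum>c\<in>UNIV. h c * D a b c) = 0"
proof -
  have normal_part: "(\<Sum>c\<in>UNIV. h c * (\<Sum>j\<in>UNIV. D a b j * P c j)) = 0"
  proof -
    have "(\<Sum>c\<in>UNIV. h c * (\<Sum>j\<in>UNIV. D a b j * P c j)) =
        (\<Sum>j\<in>UNIV. D a b j * (\<Sum>c\<in>UNIV. h c * P c j))"
      unfolding sum_distrib_left by (subst sum.swap) (simp add: mult_ac)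
    then show ?thesis by (simp add: normal)
  qed
  have "(\<Sum>c\<in>UNIV. h c * (\<Sum>j\<in>UNIV. P j b * (\<Sum>i\<in>UNIV. P i a * D i j c)))
      = (\<Sum>i\<in>UNIV. P i a * (\<Sum>j\<in>UNIV. P j b * (\<Sum>c\<in>UNIV. h c * D i j c)))"
    unfolding sum_distrib_left by (subst sum_reverse_three) (simp add: mult_ac)
  also have "\<dots> = - (\<Sum>i\<in>UNIV. P i a * (\<Sum>j\<in>UNIV. P j b * (\<Sum>c\<in>UNIV. h' i c * P c j)))"
    by (simp add: normal' sum_negf)
  also have "\<dots> = - (\<Sum>i\<in>UNIV. P i a * (\<Sum>c\<in>UNIV. h' i c * (\<Sum>j\<in>UNIV. P c j * P j b)))"
    unfolding sum_distrib_left by (subst sum.swap) (simp add: mult_ac)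
  also have "\<dots> = - (\<Sum>i\<in>UNIV. \<Sum>j\<in>UNIV. h' i j * P i a * P j b)"
    by (simp add: idem sum_distrib_left mult_ac)
  finally have tangential_part:
    "(\<Sum>c\<in>UNIV. h c * (\<Sum>j\<in>UNIV. P j b * (\<Sum>i\<in>UNIV. P i a * D i j c)))
      = - (\<Sum>i\<in>UNIV. \<Sum>j\<in>UNIV. h' i j * P i a * P j b)" .
  have "(\<Sum>c\<in>UNIV. h c * D a b c) = (\<Sum>c\<in>UNIV. h c * (\<Sum>j\<in>UNIV. D a b j * P c j))
      + (\<Sum>c\<in>UNIV. h c * (\<Sum>j\<in>UNIV. P j b * (\<Sum>i\<in>UNIV. P i a * D i j c)))"
    by (subst second) (simp add: distrib_left sum.distrib)
  then show ?thesis unfolding normal_part tangential_part by simp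
qed

lemma sum_times_kronecker_minus:
  fixes h q :: "'d::finite \<Rightarrow> real"
  shows "(\<Sum>c\<in>UNIV. h c * ((if c = b then 1 else 0) - q c)) = h b - (\<Sum>c\<in>UNIV. h c * q c)"
proof -
  have "(\<Sum>c\<in>UNIV. h c * ((if c = b then 1 else 0) - q c)) =
      (\<Sum>c\<in>UNIV. (if c = b then h c else 0) - h c * q c)"
    by (rule sum.cong) (auto simp: right_diff_distrib)
  then show ?thesis by (simp add: sum_subtractf)
qed

lemma HQ_trace_eq: "HQ_trace Pr X H t = H t - pull_trace Pr X H t"
  by (simp add: HQ_trace_def pull_trace_def Qm_def sum_times_kronecker_minus vec_eq_iff mult.commute)

lemma HQ_deriv_component:
  "HQ_deriv Pr X H H' t $ a $ r $ b = H' t $ a $ r $ b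
     - (\<Sum>c\<in>UNIV. H' t $ a $ r $ c * d1 Pr b (X t) $ c) - (\<Sum>c\<in>UNIV. H t $ r $ c * d2 Pr a b (X t) $ c)"
  by (simp add: HQ_deriv_def Qm_def dQm_def sum_subtractf sum_times_kronecker_minus)

lemma pull_trace_diff:
  "pull_trace Pr X (\<lambda>t. K t - H t) t = pull_trace Pr X K t - pull_trace Pr X H t"
  by (simp add: pull_trace_def vec_eq_iff left_diff_distrib sum_subtractf)

lemma pull_deriv_diff:
  "pull_deriv Pr X (\<lambda>t. K t - H t) (\<lambda>t. K' t - H' t) t = pull_deriv Pr X K K' t - pull_deriv Pr X H H' t"
  by (simp add: pull_deriv_def vec_eq_iff left_diff_distrib sum_subtractf sum.distrib algebra_simps)

lemma pullback_vanishes_if_fixed_by_Q: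
  assumes npp: "nearest_point_projection M A Pr" and X: "X t \<in> M"
    and trace: "H t = HQ_trace Pr X H t" and deriv: "H' t = HQ_deriv Pr X H H' t"
  shows "pull_trace Pr X H t = 0" and "pull_deriv Pr X H H' t = 0"
proof -
  show trace0: "pull_trace Pr X H t = 0"
    using trace by (simp add: HQ_trace_eq)
  have normal: "(\<Sum>c\<in>UNIV. H t $ r $ c * d1 Pr b (X t) $ c) = 0" for r b
    using arg_cong[OF trace0, of "\<lambda>m. m $ r $ b"] by (simp add: pull_trace_def)
  have normal': "(\<Sum>c\<in>UNIV. H' t $ i $ r $ c * d1 Pr b (X t) $ c) =
      - (\<Sum>c\<in>UNIV. H t $ r $ c * d2 Pr i b (X t) $ c)" for i r b
    using arg_cong[OF deriv, of "\<lambda>m. m $ i $ r $ b"] by (simp add: HQ_deriv_component)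
  have second: "d2 Pr a b (X t) $ c = (\<Sum>j\<in>UNIV. d2 Pr a b (X t) $ j * d1 Pr j (X t) $ c) +
      (\<Sum>j\<in>UNIV. d1 Pr b (X t) $ j * (\<Sum>i\<in>UNIV. d1 Pr a (X t) $ i * d2 Pr i j (X t) $ c))" for a b c
    using arg_cong[OF d2_projection_expansion[OF npp X, of a b], of "\<lambda>v. v $ c"] by simp
  have "pull_deriv Pr X H H' t $ a $ r $ b = 0" for a r b
    unfolding pull_deriv_def
    using second_order_pullback_cancels[OF normal normal' d1_projection_idem[OF npp X] second]
    by simp
  then show "pull_deriv Pr X H H' t = 0" by (simp add: vec_eq_iff)
qed

section \<open>Riemann sums over partitions\<close>

lemma real_interval_step_induct:
  fixes s t \<eta> :: real
  assumes "0 < \<eta>" "s \<le> t"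
    and base: "P t"
    and step: "\<And>u v. s \<le> u \<Longrightarrow> u < v \<Longrightarrow> v \<le> t \<Longrightarrow> v - u < \<eta> \<Longrightarrow> P v \<Longrightarrow> P u"
  shows "P s"
proof -
  have "\<forall>u. s \<le> u \<and> u \<le> t \<and> t - u \<le> real n * (\<eta>/2) \<longrightarrow> P u" for n
  proof (induction n)
    case 0
    then show ?case using base by auto
  next
    case (Suc n)
    show ?case
    proof (intro allI impI)
      fix u assume u: "s \<le> u \<and> u \<le> t \<and> t - u \<le> real (Suc n) * (\<eta>/2)"
      consider "u = t" | "u < t" "t - u < \<eta>" | "\<eta> \<le> t - u" using u by linarith
      then show "P u"
      proof cases
        case 1
        then show ?thesis using base by simp
      next
        case 2
        then show ?thesis using step[of u t] base u by blast
      next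
        case 3
        then have "P (u + \<eta>/2)" using Suc.IH u \<open>0 < \<eta>\<close> by (auto simp: algebra_simps)
        then show ?thesis using step[of u "u + \<eta>/2"] u 3 \<open>0 < \<eta>\<close> by auto
      qed
    qed
  qed
  moreover obtain n where "(t - s) / (\<eta>/2) \<le> real n" using real_arch_simple by blast
  ultimately show ?thesis using assms(1,2) by (simp add: field_simps)
qed

lemma sorted_wrt_less_le_last: "sorted_wrt (<) xs \<Longrightarrow> x \<in> set xs \<Longrightarrow> x \<le> last (xs::real list)"
proof (induction xs)
  case (Cons a xs)
  then show ?case by (cases "xs = []") (auto intro: less_imp_le)
qed simp

lemma is_partition_bounds: "is_partition s t us \<Longrightarrow> x \<in> set us \<Longrightarrow> s \<le> x \<and> x \<le> t"
  unfolding is_partition_def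
  by (metis dual_order.order_iff_strict list.collapse set_ConsD sorted_wrt_less_le_last sorted_wrt.simps(2))

lemma mesh_less_iff:
  assumes "(0::real) < \<delta>"
  shows "mesh us < \<delta> \<longleftrightarrow> (\<forall>(u,v)\<in>set (zip us (tl us)). v - u < \<delta>)"
proof (cases "length us < 2")
  case True
  then have "tl us = []" by (cases us) auto
  then show ?thesis using True assms unfolding mesh_def by simp
next
  case False
  then have "zip us (tl us) \<noteq> []" by (cases us; cases "tl us") auto
  then show ?thesis using False unfolding mesh_def by auto
qed

lemma fine_partition_exists:
  assumes "s \<le> t" "(0::real) < \<delta>"
  shows "\<exists>us. is_partition s t us \<and> mesh us < \<delta>"
proof -
  have "\<exists>us. is_partition s t us \<and> (\<forall>(u,v)\<in>set (zip us (tl us)). v - u < \<delta>)"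
    using \<open>0 < \<delta>\<close> \<open>s \<le> t\<close>
  proof (rule real_interval_step_induct)
    show "\<exists>us. is_partition t t us \<and> (\<forall>(u,v)\<in>set (zip us (tl us)). v - u < \<delta>)"
      by (intro exI[of _ "[t]"]) (simp add: is_partition_def)
  next
    fix u v assume uv: "u < v" "v - u < \<delta>"
      and "\<exists>us. is_partition v t us \<and> (\<forall>(u,v)\<in>set (zip us (tl us)). v - u < \<delta>)"
    then obtain us where us: "is_partition v t us" and gaps: "\<forall>(u,v)\<in>set (zip us (tl us)). v - u < \<delta>"
      by blast
    have ne: "us \<noteq> []" and hd: "hd us = v" using us unfolding is_partition_def by auto
    have "\<forall>x\<in>set us. u < x" using is_partition_bounds[OF us] uv(1) by fastforce
    then have "is_partition u t (u # us)" using us ne unfolding is_partition_def by simp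
    moreover have "zip (u # us) (tl (u # us)) = (u, v) # zip us (tl us)"
      using ne hd by (metis list.collapse list.sel(3) zip_Cons_Cons)
    ultimately show "\<exists>us. is_partition u t us \<and> (\<forall>(u,v)\<in>set (zip us (tl us)). v - u < \<delta>)"
      using gaps uv(2) by (metis set_ConsD case_prod_conv)
  qed
  then show ?thesis using mesh_less_iff[OF assms(2)] by blast
qed

lemma psum_cong: "(\<And>u v. u \<in> set us \<Longrightarrow> F u v = G u v) \<Longrightarrow> psum F us = psum G us"
  unfolding psum_def by (rule arg_cong[where f = sum_list], rule map_cong) (auto dest: set_zip_leftD)

lemma partition_limit_cong:
  assumes "\<And>u v. s \<le> u \<Longrightarrow> u \<le> t \<Longrightarrow> F u v = G u v"
  shows "partition_limit F s t I = partition_limit G s t I"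
proof -
  have "psum F us = psum G us" if "is_partition s t us" for us
    by (rule psum_cong) (use assms is_partition_bounds[OF that] in auto)
  then show ?thesis unfolding partition_limit_def by metis
qed

lemma partition_limit_zero_iff:
  fixes I :: "'a::real_normed_vector"
  assumes "s \<le> t"
  shows "partition_limit (\<lambda>u v. 0) s t I \<longleftrightarrow> I = 0"
proof -
  have "psum (\<lambda>u v. (0::'a)) us = 0" for us
    unfolding psum_def by (induction us) (auto simp: case_prod_beta)
  then have "partition_limit (\<lambda>u v. 0) s t I \<longleftrightarrow>
      (\<forall>\<epsilon>>0. \<exists>\<delta>>0. \<forall>us. is_partition s t us \<and> mesh us < \<delta> \<longrightarrow> norm I < \<epsilon>)"
    unfolding partition_limit_def by simp
  also have "\<dots> \<longleftrightarrow> (\<forall>\<epsilon>>0. norm I < \<epsilon>)"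
  proof
    assume fine: "\<forall>\<epsilon>>0. \<exists>\<delta>>0. \<forall>us. is_partition s t us \<and> mesh us < \<delta> \<longrightarrow> norm I < \<epsilon>"
    show "\<forall>\<epsilon>>0. norm I < \<epsilon>"
    proof (intro allI impI)
      fix \<epsilon> :: real assume "0 < \<epsilon>"
      then obtain \<delta> where "\<delta> > 0" and "\<forall>us. is_partition s t us \<and> mesh us < \<delta> \<longrightarrow> norm I < \<epsilon>"
        using fine by blast
      then show "norm I < \<epsilon>" using fine_partition_exists[OF assms] by blast
    qed
  next
    assume "\<forall>\<epsilon>>0. norm I < \<epsilon>"
    then show "\<forall>\<epsilon>>0. \<exists>\<delta>>0. \<forall>us. is_partition s t us \<and> mesh us < \<delta> \<longrightarrow> norm I < \<epsilon>"
      using zero_less_one by blast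
  qed
  also have "\<dots> \<longleftrightarrow> I = 0"
  proof
    assume "\<forall>\<epsilon>>0. norm I < \<epsilon>"
    then have "\<not> 0 < norm I" by (meson less_irrefl)
    then show "I = 0" by simp
  qed simp
  finally show ?thesis .
qed

section \<open>Controls\<close>

lemma control_uniformly_small:
  assumes ctl: "control T \<omega>" and "\<delta> > 0"
  shows "\<exists>\<eta>>0. \<forall>s t. 0 \<le> s \<and> s \<le> t \<and> t \<le> T \<and> t - s < \<eta> \<longrightarrow> \<omega> s t < \<delta>"
proof -
  define S where "S = {(s,t). 0 \<le> s \<and> s \<le> t \<and> t \<le> (T::real)}"
  have "S = {x. 0 \<le> fst x \<and> fst x \<le> snd x \<and> snd x \<le> T}" unfolding S_def by auto
  then have "closed S"
    by (simp add: closed_Collect_conj closed_Collect_le continuous_on_fst continuous_on_snd)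
  moreover have "bounded S"
    unfolding bounded_iff
  proof (intro exI ballI)
    fix x assume "x \<in> S"
    then obtain s t where x: "x = (s,t)" "0 \<le> s" "s \<le> t" "t \<le> T" unfolding S_def by auto
    have "norm x \<le> norm s + norm t" unfolding x by (rule norm_Pair_le)
    then show "norm x \<le> 2 * \<bar>T\<bar>" using x by auto
  qed
  ultimately have "uniformly_continuous_on S (\<lambda>(s,t). \<omega> s t)"
    using ctl compact_uniformly_continuous compact_eq_bounded_closed
    unfolding control_def S_def by blast
  then obtain \<eta> where "\<eta> > 0" and \<eta>: "\<forall>x\<in>S. \<forall>x'\<in>S. dist x' x < \<eta> \<longrightarrow>
      dist ((\<lambda>(s,t). \<omega> s t) x') ((\<lambda>(s,t). \<omega> s t) x) < \<delta>"
    using \<open>\<delta> > 0\<close> unfolding uniformly_continuous_on_def by metis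
  have "\<omega> s t < \<delta>" if st: "0 \<le> s" "s \<le> t" "t \<le> T" "t - s < \<eta>" for s t
  proof -
    have "(s,s) \<in> S" "(s,t) \<in> S" and "dist (s,t) (s,s) < \<eta>"
      using st unfolding S_def by (auto simp: dist_Pair_Pair dist_real_def)
    then have "dist (\<omega> s t) (\<omega> s s) < \<delta>" using \<eta> by fastforce
    moreover have "\<omega> s s = 0" using ctl st unfolding control_def by auto
    ultimately show ?thesis by (simp add: dist_real_def)
  qed
  then show ?thesis using \<open>\<eta> > 0\<close> by blast
qed

text \<open>Chopping \<open>[s,t]\<close> into pieces of small control bounds \<open>Z s t\<close> by \<open>\<epsilon> \<omega>(s,t)\<close> for
  every \<open>\<epsilon>\<close>, by superadditivity of \<open>\<omega>\<close>.\<close>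
lemma additive_little_o_control_zero:
  fixes Z :: "real \<Rightarrow> real \<Rightarrow> 'a::real_normed_vector"
  assumes ctl: "control T \<omega>"
    and add: "\<And>s u t. 0 \<le> s \<Longrightarrow> s \<le> u \<Longrightarrow> u \<le> t \<Longrightarrow> t \<le> T \<Longrightarrow> Z s t = Z s u + Z u t"
    and small: "\<forall>\<epsilon>>0. \<exists>\<delta>>0. \<forall>s t. 0 \<le> s \<and> s \<le> t \<and> t \<le> T \<and> \<omega> s t < \<delta> \<longrightarrow>
                  norm (Z s t) \<le> \<epsilon> * \<omega> s t"
    and st: "0 \<le> s" "s \<le> t" "t \<le> T"
  shows "Z s t = 0"
proof -
  have bound: "norm (Z s t) \<le> \<epsilon> * \<omega> s t" if "\<epsilon> > 0" for \<epsilon>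
  proof -
    obtain \<delta> where "\<delta> > 0" and \<delta>: "\<forall>s t. 0 \<le> s \<and> s \<le> t \<and> t \<le> T \<and> \<omega> s t < \<delta> \<longrightarrow>
        norm (Z s t) \<le> \<epsilon> * \<omega> s t"
      using small \<open>\<epsilon> > 0\<close> by blast
    obtain \<eta> where "\<eta> > 0" and \<eta>: "\<forall>s t. 0 \<le> s \<and> s \<le> t \<and> t \<le> T \<and> t - s < \<eta> \<longrightarrow> \<omega> s t < \<delta>"
      using control_uniformly_small[OF ctl \<open>\<delta> > 0\<close>] by blast
    show ?thesis
      using \<open>0 < \<eta>\<close> \<open>s \<le> t\<close>
    proof (rule real_interval_step_induct)
      have "Z t t = 0" using add[of t t t] st by simp
      moreover have "\<omega> t t = 0" using ctl st unfolding control_def by auto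
      ultimately show "norm (Z t t) \<le> \<epsilon> * \<omega> t t" by simp
    next
      fix u v assume uv: "s \<le> u" "u < v" "v \<le> t" "v - u < \<eta>"
        and IH: "norm (Z v t) \<le> \<epsilon> * \<omega> v t"
      have "norm (Z u t) \<le> norm (Z u v) + norm (Z v t)"
        using add[of u v t] uv st by (simp add: norm_triangle_ineq)
      also have "\<dots> \<le> \<epsilon> * \<omega> u v + \<epsilon> * \<omega> v t"
      proof -
        have "\<omega> u v < \<delta>" using \<eta> uv st by simp
        then have "norm (Z u v) \<le> \<epsilon> * \<omega> u v" using \<delta> uv st by simp
        then show ?thesis using IH by simp
      qed
      also have "\<dots> \<le> \<epsilon> * \<omega> u t"
        using ctl uv st \<open>\<epsilon> > 0\<close> unfolding control_def by (simp add: distrib_left[symmetric])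
      finally show "norm (Z u t) \<le> \<epsilon> * \<omega> u t" .
    qed
  qed
  have "norm (Z s t) \<le> 0"
  proof (rule field_le_epsilon)
    fix e :: real assume "0 < e"
    have "0 \<le> \<omega> s t" using ctl st unfolding control_def by auto
    then have "e / (\<omega> s t + 1) * \<omega> s t \<le> e"
      using \<open>0 < e\<close> by (simp add: field_simps)
    then show "norm (Z s t) \<le> 0 + e"
      using bound[of "e / (\<omega> s t + 1)"] \<open>0 < e\<close> \<open>0 \<le> \<omega> s t\<close> by simp
  qed
  then show ?thesis by simp
qed

section \<open>Rough integrals of normal integrands\<close>

lemma is_rough_integral_cong:
  assumes "\<And>t. 0 \<le> t \<Longrightarrow> t \<le> T \<Longrightarrow> H t = G t \<and> H' t = G' t"
  shows "is_rough_integral p \<omega> T X XX H H' Z ZZ \<longleftrightarrow> is_rough_integral p \<omega> T X XX G G' Z ZZ"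
proof -
  have "partition_limit (comp_term X XX H H') s t I \<longleftrightarrow> partition_limit (comp_term X XX G G') s t I"
    if "0 \<le> s" "t \<le> T" for s t I
    by (rule partition_limit_cong) (use assms that in \<open>simp add: comp_term_def\<close>)
  moreover have "lift_of p \<omega> T Z ZZ (int_approx XX H) \<longleftrightarrow> lift_of p \<omega> T Z ZZ (int_approx XX G)"
    using assms unfolding lift_of_def int_approx_def by auto
  ultimately show ?thesis unfolding is_rough_integral_def by auto
qed

lemma lift_of_zero_iff:
  assumes ctl: "control T \<omega>" and Z: "\<And>s t. 0 \<le> s \<Longrightarrow> s \<le> t \<Longrightarrow> t \<le> T \<Longrightarrow> Z s t = 0"
  shows "lift_of p \<omega> T Z ZZ (\<lambda>s t. 0) \<longleftrightarrow> (\<forall>s t. 0 \<le> s \<and> s \<le> t \<and> t \<le> T \<longrightarrow> ZZ s t = 0)"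
proof
  assume lift: "lift_of p \<omega> T Z ZZ (\<lambda>s t. 0)"
  have "ZZ s t = ZZ s u + ZZ u t" if "0 \<le> s" "s \<le> u" "u \<le> t" "t \<le> T" for s u t
  proof -
    have "ZZ s t = ZZ s u + (\<chi> a b. Z s u $ a * Z u t $ b) + ZZ u t"
      using lift that unfolding lift_of_def rough_incr_def by blast
    then show ?thesis using Z[of s u] Z[of u t] that by (simp add: vec_eq_iff)
  qed
  moreover have "\<forall>\<epsilon>>0. \<exists>\<delta>>0. \<forall>s t. 0 \<le> s \<and> s \<le> t \<and> t \<le> T \<and> \<omega> s t < \<delta> \<longrightarrow>
      norm (ZZ s t) \<le> \<epsilon> * \<omega> s t"
    using lift unfolding lift_of_def by simp
  ultimately show "\<forall>s t. 0 \<le> s \<and> s \<le> t \<and> t \<le> T \<longrightarrow> ZZ s t = 0"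
    using additive_little_o_control_zero[OF ctl] by blast
next
  assume ZZ: "\<forall>s t. 0 \<le> s \<and> s \<le> t \<and> t \<le> T \<longrightarrow> ZZ s t = 0"
  have "rough_incr p \<omega> T Z ZZ"
    unfolding rough_incr_def
  proof (intro conjI exI[of _ 0] allI impI)
    fix s u t assume "0 \<le> s \<and> s \<le> u \<and> u \<le> t \<and> t \<le> T"
    then show "Z s t = Z s u + Z u t" and "ZZ s t = ZZ s u + (\<chi> a b. Z s u $ a * Z u t $ b) + ZZ u t"
      using Z[of s t] Z[of s u] Z[of u t] ZZ by (auto simp: vec_eq_iff)
  qed (use Z ZZ in auto)
  moreover have "0 \<le> \<omega> s t" if "0 \<le> s" "s \<le> t" "t \<le> T" for s t
    using ctl that unfolding control_def by auto
  ultimately show "lift_of p \<omega> T Z ZZ (\<lambda>s t. 0)"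
    unfolding lift_of_def using ZZ by auto
qed

lemma is_rough_integral_zero_iff:
  assumes ctl: "control T \<omega>"
  shows "is_rough_integral p \<omega> T X XX (\<lambda>_. 0) (\<lambda>_. 0) Z ZZ \<longleftrightarrow>
         (\<forall>s t. 0 \<le> s \<and> s \<le> t \<and> t \<le> T \<longrightarrow> Z s t = 0 \<and> ZZ s t = 0)"
proof -
  have comp0: "comp_term X XX (\<lambda>_. 0) (\<lambda>_. 0) = (\<lambda>u v. 0)"
    by (intro ext) (simp add: comp_term_def vec_eq_iff)
  have approx0: "int_approx XX (\<lambda>_. 0) = (\<lambda>s t. 0)"
    by (intro ext) (simp add: int_approx_def vec_eq_iff)
  have "is_rough_integral p \<omega> T X XX (\<lambda>_. 0) (\<lambda>_. 0) Z ZZ \<longleftrightarrow>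
      (\<forall>s t. 0 \<le> s \<and> s \<le> t \<and> t \<le> T \<longrightarrow> Z s t = 0) \<and> lift_of p \<omega> T Z ZZ (\<lambda>s t. 0)"
    unfolding is_rough_integral_def comp0 approx0 by (auto simp: partition_limit_zero_iff)
  then show ?thesis using lift_of_zero_iff[OF ctl] by blast
qed

lemma constrained_integral_of_normal_integrand:
  assumes npp: "nearest_point_projection M A Pr" and ctl: "control T \<omega>"
    and XM: "\<And>t. 0 \<le> t \<Longrightarrow> t \<le> T \<Longrightarrow> X t \<in> M" and fixed: "fixed_by_Q T Pr X H H'"
  shows "is_constrained_integral p \<omega> T Pr X XX H H' Z ZZ \<longleftrightarrow>
         (\<forall>s t. 0 \<le> s \<and> s \<le> t \<and> t \<le> T \<longrightarrow> Z s t = 0 \<and> ZZ s t = 0)"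
proof -
  have "pull_trace Pr X H t = 0 \<and> pull_deriv Pr X H H' t = 0" if "0 \<le> t" "t \<le> T" for t
    using pullback_vanishes_if_fixed_by_Q[where X = X and t = t, OF npp XM[OF that]] fixed that
    unfolding fixed_by_Q_def by blast
  then have "is_constrained_integral p \<omega> T Pr X XX H H' Z ZZ \<longleftrightarrow>
      is_rough_integral p \<omega> T X XX (\<lambda>_. 0) (\<lambda>_. 0) Z ZZ"
    unfolding is_constrained_integral_def by (intro is_rough_integral_cong) auto
  then show ?thesis using is_rough_integral_zero_iff[OF ctl] by simp
qed

lemma constrained_integral_normal_perturbation:
  assumes npp: "nearest_point_projection M A Pr"
    and XM: "\<And>t. 0 \<le> t \<Longrightarrow> t \<le> T \<Longrightarrow> X t \<in> M"
    and fixed: "fixed_by_Q T Pr X (\<lambda>t. K t - H t) (\<lambda>t. K' t - H' t)"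
  shows "is_constrained_integral p \<omega> T Pr X XX H H' Z ZZ \<longleftrightarrow>
         is_constrained_integral p \<omega> T Pr X XX K K' Z ZZ"
proof -
  have "pull_trace Pr X H t = pull_trace Pr X K t \<and> pull_deriv Pr X H H' t = pull_deriv Pr X K K' t"
    if "0 \<le> t" "t \<le> T" for t
    using pullback_vanishes_if_fixed_by_Q[where X = X and t = t,
        OF npp XM[OF that], where H = "\<lambda>t. K t - H t" and H' = "\<lambda>t. K' t - H' t"] fixed that unfolding fixed_by_Q_def pull_trace_diff pull_deriv_diff by simp
  then show ?thesis
    unfolding is_constrained_integral_def by (intro is_rough_integral_cong) auto
qed

theorem mainTheorem10:
  fixes M A :: "(real^'d) set"
    and Pr :: "real^'d \<Rightarrow> real^'d"
    and p T :: real
    and \<omega> :: "real \<Rightarrow> real \<Rightarrow> real"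
    and X :: "real \<Rightarrow> real^'d"
    and XX :: "real \<Rightarrow> real \<Rightarrow> real^'d^'d"
  assumes "embedded_submanifold M"
    and "nearest_point_projection M A Pr"
    and "1 \<le> p" and "p < 3"
    and "control T \<omega>"
    and "manifold_rough_path p \<omega> T M Pr X XX"
  shows
    "(\<forall>(H :: real \<Rightarrow> real^'d^'e) H'.
        controlled p \<omega> T X H H' \<and> fixed_by_Q T Pr X H H' \<longrightarrow>
        (\<forall>Z ZZ. is_constrained_integral p \<omega> T Pr X XX H H' Z ZZ \<longleftrightarrow>
                (\<forall>s t. 0 \<le> s \<and> s \<le> t \<and> t \<le> T \<longrightarrow> Z s t = 0 \<and> ZZ s t = 0))) \<and>
     (\<forall>(H :: real \<Rightarrow> real^'d^'e) H' K K'.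
        controlled p \<omega> T X H H' \<and> controlled p \<omega> T X K K' \<and>
        fixed_by_Q T Pr X (\<lambda>t. K t - H t) (\<lambda>t. K' t - H' t) \<longrightarrow>
        (\<forall>Z ZZ. is_constrained_integral p \<omega> T Pr X XX H H' Z ZZ \<longleftrightarrow>
                is_constrained_integral p \<omega> T Pr X XX K K' Z ZZ))"
proof -
  have XM: "\<And>t. 0 \<le> t \<Longrightarrow> t \<le> T \<Longrightarrow> X t \<in> M"
    using assms(6) unfolding manifold_rough_path_def by auto
  show ?thesis
  proof (intro conjI allI impI)
    fix H :: "real \<Rightarrow> real^'d^'e" and H' Z ZZ
    assume "controlled p \<omega> T X H H' \<and> fixed_by_Q T Pr X H H'"
    then show "is_constrained_integral p \<omega> T Pr X XX H H' Z ZZ \<longleftrightarrow>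
        (\<forall>s t. 0 \<le> s \<and> s \<le> t \<and> t \<le> T \<longrightarrow> Z s t = 0 \<and> ZZ s t = 0)"
      using constrained_integral_of_normal_integrand[where X = X, OF assms(2,5) XM] by blast
  next
    fix H :: "real \<Rightarrow> real^'d^'e" and H' K K' Z ZZ
    assume "controlled p \<omega> T X H H' \<and> controlled p \<omega> T X K K' \<and>
        fixed_by_Q T Pr X (\<lambda>t. K t - H t) (\<lambda>t. K' t - H' t)"
    then show "is_constrained_integral p \<omega> T Pr X XX H H' Z ZZ \<longleftrightarrow>
        is_constrained_integral p \<omega> T Pr X XX K K' Z ZZ"
      using constrained_integral_normal_perturbation[where X = X, OF assms(2) XM] by blast
  qed
qed

end
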